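(* Let $t,\ell,m$ be integers with $1 \le t \le \ell \le m$. Then $$\hat{w}_1(t;\ell,m)=q^{\ell+m-2}\,\nu_{t-1}(\ell-1,m-1).$$
   Context: $q$ is a prime power and $\mathbb{F}_q$ the field with $q$ elements. For nonnegative integers $a,b,t$, $\mu_t(a,b)$ denotes the number of $a\times b$ matrices over $\mathbb{F}_q$ of rank exactly $t$ (so $\mu_0(a,b)=1$), and $\nu_t(a,b)=\sum_{s=0}^{t}\mu_s(a,b)$ is the number of $a\times b$ matrices over $\mathbb{F}_q$ of rank at most $t$. For an $\ell\times m$ matrix $M=(m_{ij})$ and $0\le r\le \ell$, the $r$-th partial trace is $\tau_r(M)=m_{11}+m_{22}+\cdots+m_{rr}$ (with $\tau_0=0$). For $0\le r\le \ell$ and $1\le t\le \ell$, define $$\hat{w}_r(t;\ell,m)=\frac{1}{q-1}\,\bigl|\{M\in \mathrm{Mat}_{\ell\times m}(\mathbb{F}_q): 1\le \mathrm{rk}(M)\le t,\ \tau_r(M)\ne 0\}\bigr|.$$ *)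

theory Defs
  imports "Jordan_Normal_Form.DL_Rank"
begin

text \<open>Matrices over the finite field 'a (q = CARD('a)) are JNF matrices;
  Mat_{a x b}(F_q) is carrier_mat a b. Rank is the JNF rank (dimension of column span).\<close>

definition mrank :: "'a::{finite,field} mat \<Rightarrow> nat" where
  "mrank M = vec_space.rank (dim_row M) M"

definition mu :: "'a::{finite,field} itself \<Rightarrow> nat \<Rightarrow> nat \<Rightarrow> nat \<Rightarrow> nat" where
  "mu _ t a b = card {M :: 'a mat. M \<in> carrier_mat a b \<and> mrank M = t}"

definition nu :: "'a::{finite,field} itself \<Rightarrow> nat \<Rightarrow> nat \<Rightarrow> nat \<Rightarrow> nat" where
  "nu ty t a b = (\<Sum>s\<le>t. mu ty s a b)"

definition partial_trace :: "nat \<Rightarrow> 'a::comm_monoid_add mat \<Rightarrow> 'a" where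
  "partial_trace r M = (\<Sum>i<r. M $$ (i, i))"

definition w_hat :: "'a::{finite,field} itself \<Rightarrow> nat \<Rightarrow> nat \<Rightarrow> nat \<Rightarrow> nat \<Rightarrow> real" where
  "w_hat _ r t l m =
     real (card {M :: 'a mat. M \<in> carrier_mat l m \<and> 1 \<le> mrank M \<and> mrank M \<le> t
                  \<and> partial_trace r M \<noteq> 0}) / (real (card (UNIV :: 'a set)) - 1)"

end

theory Submission
  imports Defs "Jordan_Normal_Form.Matrix_Kernel" "Berlekamp_Zassenhaus.Berlekamp_Type_Based"
begin

(* A matrix M with pivot a = M(1,1) <> 0 is determined by a, the rest r of its first row, the
   rest c of its first column and its Schur complement N = M' - c r / a, and every such quadruple
   occurs. Clearing the first row by column operations shows rk M = 1 + rk N. Hence the matrices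
   counted by w_1(t) correspond to the quadruples with a <> 0 and rk N <= t - 1, of which there
   are (q - 1) q^(m-1) q^(l-1) nu_(t-1)(l - 1, m - 1). *)

context vec_space
begin

lemma col_span_basis_exists:
  assumes A: "A \<in> carrier_mat n nc"
  obtains B where "B \<subseteq> set (cols A)" "lin_indpt B" "span B = span (set (cols A))"
proof -
  have cols_carrier: "set (cols A) \<subseteq> carrier_vec n" using A cols_dim by blast
  have "lin_indpt {}" unfolding lin_dep_def by auto
  then obtain B where B: "maximal B (\<lambda>T. T \<subseteq> set (cols A) \<and> lin_indpt T)"
    using maximal_exists_superset[of "set (cols A)" "\<lambda>T. T \<subseteq> set (cols A) \<and> lin_indpt T" "{}"]
    by blast
  then have BA: "B \<subseteq> set (cols A)" and li: "lin_indpt B" unfolding maximal_def by auto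
  then have Bc: "B \<subseteq> carrier_vec n" using cols_carrier by auto
  have "set (cols A) \<subseteq> span B"
  proof
    fix v assume v: "v \<in> set (cols A)"
    show "v \<in> span B"
    proof (cases "v \<in> B")
      case True
      then show ?thesis using span_mem[OF Bc] by auto
    next
      case False
      have "\<not> lin_indpt (B \<union> {v})"
        using B v BA False unfolding maximal_def by blast
      then show ?thesis using lin_dep_iff_in_span[OF Bc li _ False] v cols_carrier by auto
    qed
  qed
  then have "span (set (cols A)) \<subseteq> span B"
    using span_is_subset[OF _ span_is_submodule[OF Bc]] by blast
  with span_is_monotone[OF BA] show ?thesis using that BA li by blast
qed

lemma rank_eq_card_basis:
  assumes A: "A \<in> carrier_mat n nc"
    and B: "B \<subseteq> carrier_vec n" "finite B" "lin_indpt B" "span B = span (set (cols A))"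
  shows "rank A = card B"
proof -
  have "maximal B (\<lambda>T. T \<subseteq> B \<and> lin_indpt T)" using B(3) unfolding maximal_def by auto
  then show ?thesis unfolding rank_def B(4)[symmetric] using dim_span[OF B(1,2)] by blast
qed

lemma span_add_smult:
  assumes U: "U \<subseteq> carrier_vec n" and x: "x \<in> span U" and u: "u \<in> span U"
  shows "x + c \<cdot>\<^sub>v u \<in> span U"
proof -
  have "c \<cdot>\<^sub>v u \<in> span U"
    using submodule.smult_closed[OF span_is_submodule[OF U], of c u] u by simp
  then show ?thesis using span_add1[OF U x] by simp
qed

lemma span_insert_shear:
  assumes u: "u \<in> carrier_vec n" and f: "f ` I \<subseteq> carrier_vec n"
  shows "span (insert u ((\<lambda>i. f i + s i \<cdot>\<^sub>v u) ` I)) = span (insert u (f ` I))"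
    (is "span ?L = span ?R")
proof -
  have L: "?L \<subseteq> carrier_vec n" and R: "?R \<subseteq> carrier_vec n" using u f by auto
  have uL: "u \<in> span ?L" and uR: "u \<in> span ?R" using span_mem L R by auto
  have "?L \<subseteq> span ?R"
  proof
    fix x assume "x \<in> ?L"
    then show "x \<in> span ?R" using uR span_add_smult[OF R _ uR] span_mem[OF R] by auto
  qed
  moreover have "?R \<subseteq> span ?L"
  proof
    fix x assume "x \<in> ?R"
    then consider "x = u" | i where "i \<in> I" "x = f i" by auto
    then show "x \<in> span ?L"
    proof cases
      case (2 i)
      have "f i + s i \<cdot>\<^sub>v u \<in> span ?L" using 2(1) span_mem[OF L] by auto
      from span_add_smult[OF L this uL, of "- s i"]
      show ?thesis using 2 u f by (auto simp: smult_l_minus)  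
    qed (use uL in simp)
  qed
  ultimately show ?thesis
    using span_is_subset[OF _ span_is_submodule[OF L]] span_is_subset[OF _ span_is_submodule[OF R]]
    by blast
qed

end

context vardim
begin

lemma lin_indpt_insert_padl:
  assumes T: "T \<subseteq> carrier_vec n" "\<not> lin_dep n T"
    and u: "u \<in> carrier_vec (Suc n)" "u $ 0 \<noteq> 0"
  shows "\<not> lin_dep (Suc n) (insert u (padl 1 ` T))" and "u \<notin> padl 1 ` T"
proof -
  interpret S: vec_space "TYPE('a)" "Suc n" .
  interpret T: vec_space "TYPE('a)" n .
  have padT: "padl 1 ` T \<subseteq> carrier_vec (Suc n)" using padl_image[OF T(1), of 1] by simp
  have "u \<notin> padl 1 ` span n T"
  proof
    assume "u \<in> padl 1 ` span n T"
    then obtain v where "v \<in> carrier_vec n" "u = padl 1 v" using T.span_closed[OF T(1)] by auto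
    then show False using u(2) by (simp add: index_append_vec)
  qed
  then have u_notin_span: "u \<notin> S.span (padl 1 ` T)" using span_pad(2)[OF T(1), of 1] by simp
  then show u_notin: "u \<notin> padl 1 ` T" using S.span_mem[OF padT] by blast
  interpret O: vec_space "TYPE('a)" 1 .
  have "\<not> O.lin_dep {}" unfolding O.lin_dep_def by auto
  then have "\<not> lin_dep (Suc n) (padr n ` {} \<union> padl 1 ` T)"
    using padr_padl_lindep[of "{}" 1 T n] T by simp
  then have "S.lin_indpt (padl 1 ` T)" by simp
  then show "\<not> lin_dep (Suc n) (insert u (padl 1 ` T))"
    using S.lin_dep_iff_in_span[OF padT _ u(1) u_notin] u_notin_span by simp
qed

end

(* The block matrix [a, r^T; c, N + c r^T / a], whose Schur complement at the pivot a is N. *)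

definition bordered_mat :: "'a::field \<Rightarrow> 'a vec \<Rightarrow> 'a vec \<Rightarrow> 'a mat \<Rightarrow> 'a mat" where
  "bordered_mat a r c N = mat (Suc (dim_vec c)) (Suc (dim_vec r)) (\<lambda>(i, j).
     if i = 0 then (if j = 0 then a else r $ (j - 1))
     else if j = 0 then c $ (i - 1) else N $$ (i - 1, j - 1) + c $ (i - 1) * r $ (j - 1) / a)"

lemma bordered_mat_carrier:
  "r \<in> carrier_vec k \<Longrightarrow> c \<in> carrier_vec n \<Longrightarrow> bordered_mat a r c N \<in> carrier_mat (Suc n) (Suc k)"
  unfolding bordered_mat_def by auto

lemma bordered_mat_index:
  "i < Suc (dim_vec c) \<Longrightarrow> j < Suc (dim_vec r) \<Longrightarrow> bordered_mat a r c N $$ (i, j) =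
     (if i = 0 then (if j = 0 then a else r $ (j - 1))
      else if j = 0 then c $ (i - 1) else N $$ (i - 1, j - 1) + c $ (i - 1) * r $ (j - 1) / a)"
  unfolding bordered_mat_def by simp

lemma set_cols_bordered_mat:
  assumes a: "a \<noteq> 0" and r: "r \<in> carrier_vec k" and c: "c \<in> carrier_vec n"
    and N: "N \<in> carrier_mat n k"
  shows "set (cols (bordered_mat a r c N))
    = insert (vCons a c) ((\<lambda>j. (0\<^sub>v 1 @\<^sub>v col N j) + (r $ j / a) \<cdot>\<^sub>v vCons a c) ` {..<k})"
proof -
  let ?M = "bordered_mat a r c N"
  have dims: "dim_vec c = n" "dim_vec r = k" "dim_row ?M = Suc n" "dim_col ?M = Suc k"
    using bordered_mat_carrier[OF r c] r c by auto
  have col_0: "col ?M 0 = vCons a c"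
    by (rule eq_vecI) (auto simp: dims bordered_mat_index vec_index_vCons)
  have col_Suc: "col ?M (Suc j) = (0\<^sub>v 1 @\<^sub>v col N j) + (r $ j / a) \<cdot>\<^sub>v vCons a c" if j: "j < k" for j
  proof (rule eq_vecI)
    fix i assume "i < dim_vec ((0\<^sub>v 1 @\<^sub>v col N j) + (r $ j / a) \<cdot>\<^sub>v vCons a c)"
    then have i: "i < Suc n" using dims by simp
    show "col ?M (Suc j) $ i = ((0\<^sub>v 1 @\<^sub>v col N j) + (r $ j / a) \<cdot>\<^sub>v vCons a c) $ i"
      using i j N a by (cases i) (auto simp: dims bordered_mat_index index_append_vec field_simps)
  qed (use dims N in simp)
  have "set (cols ?M) = col ?M ` {0..<Suc k}"
    unfolding cols_def dims by (simp only: set_map set_upt)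
  also have "{0..<Suc k} = insert 0 (Suc ` {..<k})"
    by (simp only: atLeast0LessThan lessThan_Suc_eq_insert_0)
  finally show ?thesis using col_0 col_Suc by (auto simp: image_iff)
qed

lemma rank_bordered_mat:
  fixes N :: "'a::field mat"
  assumes a: "a \<noteq> 0" and r: "r \<in> carrier_vec k" and c: "c \<in> carrier_vec n"
    and N: "N \<in> carrier_mat n k"
  shows "vec_space.rank (Suc n) (bordered_mat a r c N) = Suc (vec_space.rank n N)"
proof -
  interpret S: vec_space "TYPE('a)" "Suc n" .
  interpret T: vec_space "TYPE('a)" n .
  \<comment> \<open>the first column u has top entry a \<noteq> 0, so it is independent of the shifted columns of N\<close>
  let ?M = "bordered_mat a r c N" and ?u = "vCons a c" and ?pad = "vardim.padl 1"
  obtain B where B: "B \<subseteq> set (cols N)" "T.lin_indpt B" "T.span B = T.span (set (cols N))"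
    using T.col_span_basis_exists[OF N] by blast
  have colsN: "set (cols N) \<subseteq> carrier_vec n" using cols_dim[of N] N by auto
  then have Bc: "B \<subseteq> carrier_vec n" using B(1) by auto
  have u: "?u \<in> carrier_vec (Suc n)" "?u $ 0 \<noteq> 0" using c a by auto
  have pad_carrier: "?pad ` X \<subseteq> carrier_vec (Suc n)" if "X \<subseteq> carrier_vec n" for X
    using vardim.padl_image[OF that, of 1] by simp
  have pad_span: "S.span (?pad ` X) = ?pad ` T.span X" if "X \<subseteq> carrier_vec n" for X
    using vardim.span_pad(2)[OF that, of 1] by simp
  have pad_cols: "(\<lambda>j. ?pad (col N j)) ` {..<k} = ?pad ` set (cols N)"
    using N unfolding cols_def by (auto simp: atLeast0LessThan)
  have "S.span (set (cols ?M)) = S.span (insert ?u ((\<lambda>j. ?pad (col N j)) ` {..<k}))"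
    unfolding set_cols_bordered_mat[OF a r c N]
    by (rule S.span_insert_shear) (use u pad_cols pad_carrier[OF colsN] in auto)
  also note pad_cols
  also have "S.span (insert ?u (?pad ` set (cols N))) = S.span (insert ?u (?pad ` B))"
    using S.span_Un[of "{?u}" "{?u}" "?pad ` set (cols N)" "?pad ` B"]
      pad_carrier[OF colsN] pad_carrier[OF Bc] pad_span[OF colsN] pad_span[OF Bc] B(3) u(1)
    by simp
  finally have "S.rank ?M = card (insert ?u (?pad ` B))"
    using S.rank_eq_card_basis[OF bordered_mat_carrier[OF r c]] pad_carrier[OF Bc] u(1)
      vardim.lin_indpt_insert_padl(1)[OF Bc B(2) u] finite_subset[OF B(1)]
    by simp
  also have "\<dots> = Suc (card B)"
    using vardim.lin_indpt_insert_padl(2)[OF Bc B(2) u] finite_subset[OF B(1)]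
      card_image[OF inj_on_subset[OF vardim.padl_inj Bc]] by simp
  also have "card B = T.rank N"
    using T.rank_eq_card_basis[OF N Bc finite_subset[OF B(1)] B(2,3)] by simp
  finally show ?thesis .
qed

definition schur_complement :: "'a::field mat \<Rightarrow> 'a mat" where
  "schur_complement M = mat (dim_row M - 1) (dim_col M - 1)
     (\<lambda>(i, j). M $$ (Suc i, Suc j) - M $$ (Suc i, 0) * M $$ (0, Suc j) / M $$ (0, 0))"

definition border_split :: "'a::field mat \<Rightarrow> 'a \<times> 'a vec \<times> 'a vec \<times> 'a mat" where
  "border_split M = (M $$ (0, 0), vec (dim_col M - 1) (\<lambda>j. M $$ (0, Suc j)),
     vec (dim_row M - 1) (\<lambda>i. M $$ (Suc i, 0)), schur_complement M)"

lemma bordered_mat_border_split: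
  assumes M: "M \<in> carrier_mat (Suc n) (Suc k)" and pivot: "M $$ (0, 0) \<noteq> 0"
    and split: "border_split M = (a, r, c, N)"
  shows "bordered_mat a r c N = M"
proof -
  have dims: "dim_row M = Suc n" "dim_col M = Suc k" using M by auto
  have parts: "a = M $$ (0, 0)" "r = vec k (\<lambda>j. M $$ (0, Suc j))" "c = vec n (\<lambda>i. M $$ (Suc i, 0))"
    "N = schur_complement M"
    using split unfolding border_split_def dims by auto
  show ?thesis
  proof (rule eq_matI)
    fix i j assume "i < dim_row M" "j < dim_col M"
    then show "bordered_mat a r c N $$ (i, j) = M $$ (i, j)"
      using pivot by (cases i; cases j) (auto simp: parts dims bordered_mat_index schur_complement_def)
  qed (auto simp: parts dims bordered_mat_def)
qed

lemma border_split_bordered_mat: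
  assumes a: "a \<noteq> 0" and r: "r \<in> carrier_vec k" and c: "c \<in> carrier_vec n"
    and N: "N \<in> carrier_mat n k"
  shows "border_split (bordered_mat a r c N) = (a, r, c, N)"
proof -
  let ?M = "bordered_mat a r c N"
  have dims: "dim_vec c = n" "dim_vec r = k" "dim_row ?M = Suc n" "dim_col ?M = Suc k"
    using bordered_mat_carrier[OF r c] r c by auto
  have "schur_complement ?M = N"
    by (rule eq_matI) (use N a in \<open>auto simp: schur_complement_def dims bordered_mat_index\<close>)
  moreover have "vec k (\<lambda>j. ?M $$ (0, Suc j)) = r"
    by (rule eq_vecI) (auto simp: dims bordered_mat_index)
  moreover have "vec n (\<lambda>i. ?M $$ (Suc i, 0)) = c"
    by (rule eq_vecI) (auto simp: dims bordered_mat_index)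
  ultimately show ?thesis
    unfolding border_split_def dims by (simp add: bordered_mat_index dims)
qed

lemma finite_carrier_mat: "finite (carrier_mat n k :: 'a::finite mat set)"
proof (rule finite_subset)
  show "(carrier_mat n k :: 'a mat set) \<subseteq> mat_of_cols n ` {cs. set cs \<subseteq> carrier_vec n \<and> length cs = k}"
  proof
    fix M :: "'a mat" assume M: "M \<in> carrier_mat n k"
    show "M \<in> mat_of_cols n ` {cs. set cs \<subseteq> carrier_vec n \<and> length cs = k}"
      by (rule image_eqI[of _ _ "cols M"]) (use M mat_of_cols_cols[of M] cols_dim[of M] in auto)
  qed
  show "finite (mat_of_cols n ` {cs. set cs \<subseteq> (carrier_vec n :: 'a vec set) \<and> length cs = k})"
    by (intro finite_imageI finite_lists_length_eq finite_carrier_vec)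
qed

lemma card_nonzero_pivot_by_rank:
  fixes P :: "nat \<Rightarrow> bool"
  shows "card {M :: 'a::{finite,field} mat. M \<in> carrier_mat (Suc n) (Suc k) \<and> M $$ (0, 0) \<noteq> 0
             \<and> P (mrank M)}
    = (CARD('a) - 1) * CARD('a) ^ k * CARD('a) ^ n
        * card {N :: 'a mat. N \<in> carrier_mat n k \<and> P (Suc (mrank N))}"
proof -
  define S where "S = {M :: 'a mat. M \<in> carrier_mat (Suc n) (Suc k) \<and> M $$ (0, 0) \<noteq> 0
    \<and> P (mrank M)}"
  define R where "R = {N :: 'a mat. N \<in> carrier_mat n k \<and> P (Suc (mrank N))}"
  define Q where "Q = (UNIV - {0 :: 'a}) \<times> (carrier_vec k :: 'a vec set) \<times> (carrier_vec n :: 'a vec set) \<times> R"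
  have mrank_bordered: "mrank (bordered_mat a r c N) = Suc (mrank N)"
    if "a \<noteq> 0" "r \<in> carrier_vec k" "c \<in> carrier_vec n" "N \<in> carrier_mat n k" for a r c N
  proof -
    have "dim_row (bordered_mat a r c N) = Suc n" using bordered_mat_carrier[OF that(2,3)] by auto
    then show ?thesis using rank_bordered_mat[OF that] that(4) unfolding mrank_def by simp
  qed
  have "bij_betw border_split S Q"
  proof (rule bij_betw_byWitness[where f' = "\<lambda>(a, r, c, N). bordered_mat a r c N"])
    show "\<forall>M\<in>S. (\<lambda>(a, r, c, N). bordered_mat a r c N) (border_split M) = M"
    proof
      fix M assume "M \<in> S"
      then have M: "M \<in> carrier_mat (Suc n) (Suc k)" "M $$ (0, 0) \<noteq> 0" unfolding S_def by auto
      obtain a r c N where split: "border_split M = (a, r, c, N)" by (cases "border_split M")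
      show "(\<lambda>(a, r, c, N). bordered_mat a r c N) (border_split M) = M"
        using bordered_mat_border_split[OF M split] split by simp
    qed
    show "\<forall>p\<in>Q. border_split ((\<lambda>(a, r, c, N). bordered_mat a r c N) p) = p"
    proof
      fix p assume "p \<in> Q"
      then obtain a r c N where "p = (a, r, c, N)" "a \<noteq> 0" "r \<in> carrier_vec k" "c \<in> carrier_vec n"
        "N \<in> carrier_mat n k"
        unfolding Q_def R_def by auto
      then show "border_split ((\<lambda>(a, r, c, N). bordered_mat a r c N) p) = p"
        using border_split_bordered_mat by simp
    qed
    show "(\<lambda>(a, r, c, N). bordered_mat a r c N) ` Q \<subseteq> S"
    proof
      fix M assume "M \<in> (\<lambda>(a, r, c, N). bordered_mat a r c N) ` Q"
      then obtain a r c N where M: "M = bordered_mat a r c N" and parts: "a \<noteq> 0" "r \<in> carrier_vec k"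
        "c \<in> carrier_vec n" "N \<in> carrier_mat n k" and P: "P (Suc (mrank N))"
        unfolding Q_def R_def by auto
      have "M $$ (0, 0) = a" unfolding M by (simp add: bordered_mat_index)
      then show "M \<in> S"
        unfolding S_def using bordered_mat_carrier[OF parts(2,3)] mrank_bordered[OF parts] P parts(1) M
        by simp
    qed
    show "border_split ` S \<subseteq> Q"
    proof
      fix p assume "p \<in> border_split ` S"
      then obtain M where "M \<in> S" and p: "p = border_split M" by blast
      then have M: "M \<in> carrier_mat (Suc n) (Suc k)" "M $$ (0, 0) \<noteq> 0" "P (mrank M)"
        unfolding S_def by auto
      obtain a r c N where split: "border_split M = (a, r, c, N)" by (cases "border_split M")
      have parts: "a \<noteq> 0" "r \<in> carrier_vec k" "c \<in> carrier_vec n" "N \<in> carrier_mat n k"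
        using split M(1,2) unfolding border_split_def schur_complement_def by auto
      have "P (Suc (mrank N))"
        using M(3) mrank_bordered[OF parts] bordered_mat_border_split[OF M(1,2) split] by simp
      then show "p \<in> Q" unfolding p split Q_def R_def using parts by simp
    qed
  qed
  then have "card S = card Q" by (rule bij_betw_same_card)
  also have "\<dots> = (CARD('a) - 1) * CARD('a) ^ k * CARD('a) ^ n * card R"
    unfolding Q_def by (simp add: card_cartesian_product card_Diff_singleton card_carrier_vec)
  finally show ?thesis unfolding S_def R_def .
qed

lemma card_rank_le_eq_nu:
  "card {N :: 'a::{finite,field} mat. N \<in> carrier_mat n k \<and> mrank N \<le> s} = nu TYPE('a) s n k"
proof -
  have "{N :: 'a mat. N \<in> carrier_mat n k \<and> mrank N \<le> s}
      = (\<Union>j\<le>s. {N. N \<in> carrier_mat n k \<and> mrank N = j})"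
    by auto
  moreover have "card (\<Union>j\<le>s. {N :: 'a mat. N \<in> carrier_mat n k \<and> mrank N = j})
      = (\<Sum>j\<le>s. card {N :: 'a mat. N \<in> carrier_mat n k \<and> mrank N = j})"
    by (rule card_UN_disjoint) (auto intro: finite_subset[OF _ finite_carrier_mat])
  ultimately show ?thesis unfolding nu_def mu_def by simp
qed

theorem proposition1:
  fixes t l m :: nat
  assumes "1 \<le> t" and "t \<le> l" and "l \<le> m"
  shows "w_hat TYPE('a::{finite,field}) 1 t l m
           = real (card (UNIV :: 'a set) ^ (l + m - 2)) * real (nu TYPE('a) (t - 1) (l - 1) (m - 1))"
proof -
  obtain n k where l: "l = Suc n" and m: "m = Suc k" using assms by (cases l; cases m) auto
  have q: "CARD('a) > 1"
    using card_mono[of UNIV "{0 :: 'a, 1}"] by simp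
  have "{M :: 'a mat. M \<in> carrier_mat l m \<and> 1 \<le> mrank M \<and> mrank M \<le> t \<and> partial_trace 1 M \<noteq> 0}
      = {M. M \<in> carrier_mat (Suc n) (Suc k) \<and> M $$ (0, 0) \<noteq> 0 \<and> 1 \<le> mrank M \<and> mrank M \<le> t}"
    unfolding l m partial_trace_def by auto
  also have "card \<dots> = (CARD('a) - 1) * CARD('a) ^ k * CARD('a) ^ n
      * card {N :: 'a mat. N \<in> carrier_mat n k \<and> 1 \<le> Suc (mrank N) \<and> Suc (mrank N) \<le> t}"
    by (rule card_nonzero_pivot_by_rank)
  also have "{N :: 'a mat. N \<in> carrier_mat n k \<and> 1 \<le> Suc (mrank N) \<and> Suc (mrank N) \<le> t}
      = {N. N \<in> carrier_mat n k \<and> mrank N \<le> t - 1}"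
    using assms(1) by auto
  finally have "w_hat TYPE('a) 1 t l m
      = real ((CARD('a) - 1) * CARD('a) ^ k * CARD('a) ^ n * nu TYPE('a) (t - 1) n k) / (real CARD('a) - 1)"
    unfolding w_hat_def card_rank_le_eq_nu by simp
  also have "\<dots> = real (CARD('a) ^ (n + k)) * real (nu TYPE('a) (t - 1) n k)"
    using q by (simp add: of_nat_diff power_add field_simps)
  finally show ?thesis unfolding l m by simp
qed

end
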